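(* Let $a,d\in\mathbb N$, $\mu\in\mathbb R$, $\delta=\mu\sigma_d$, and let $\chi$ be a dominant weight with $\chi+\rho+\delta\in\mathbf V^a(1,d)$; let $e=e(\chi)$. Then for every $1\le l\le d$ we have $p_l(\chi)\ge p(\chi)$, and the inequality is strict if $l>e$.
   Context: $M(d)$: character lattice of the diagonal torus of $GL(d)$ with coordinate characters $\beta_i$; dominant means $c_1\le\dots\le c_d$ for $\sum c_i\beta_i$; $\rho=\frac12\sum_{j<i}(\beta_i-\beta_j)$, $\sigma_d=\sum\beta_i$; $\mathbf V^a(1,d)=\frac32\mathrm{sum}[0,\beta_i-\beta_j]+\frac a2\mathrm{sum}[-\beta_k,\beta_k]+\mathrm{sum}[-\beta_k,0]$ (Minkowski sums over all $i,j,k$). For such $\chi$, $\chi+\rho+\delta$ is strictly dominant and lies in $\mathbf V^a(1,d)$, and $e(\chi)$ is the unique $0\le e\le d$ such that $\chi+\rho+\delta=\sum_{j<i\le e}c_{ij}(\beta_i-\beta_j)+\sum_{e<j<i}c_{ij}(\beta_i-\beta_j)+\sum_{j\le e<i}\frac32(\beta_i-\beta_j)+\sum_ic_i\beta_i$ with $0\le c_{ij}\le\frac32$, $-\frac{a+2}2\le c_i\le-\frac a2$ for $i\le e$, $-\frac a2<c_i\le\frac a2$ for $i>e$. For a weight $\psi$ and $1\le l\le d$, writing $\psi+\rho+\delta=\sum b_i\beta_i$, put $p_l(\psi):=\sum_{i\le l}b_i+\frac32l(d-l)+\frac a2l$, and $p(\chi):=p_{e(\chi)}(\chi)$ (which equals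 $\sum_{i\le e}(c_i+\frac a2)\le0$). *)

theory Defs
  imports Main "HOL.Real"
begin

text \<open>Weights of the diagonal torus of GL(d) are represented by their coefficient
functions w.r.t. the coordinate characters beta_1..beta_d: a weight in M(d) is
chi :: nat => int, where chi k is the coefficient of beta_k (only k in 1..d matter).
Real vectors in M(d) tensor R are functions nat => real on indices 1..d.\<close>

definition dominant :: "nat \<Rightarrow> (nat \<Rightarrow> int) \<Rightarrow> bool" where
  "dominant d chi \<longleftrightarrow> (\<forall>i j. 1 \<le> i \<longrightarrow> i \<le> j \<longrightarrow> j \<le> d \<longrightarrow> chi i \<le> chi j)"

text \<open>Coefficients of chi + rho + delta, where rho = 1/2 sum_{j<i}(beta_i - beta_j)
(coefficient of beta_k is (2k-d-1)/2) and delta = mu * sigma_d.\<close>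
definition shifted :: "nat \<Rightarrow> real \<Rightarrow> (nat \<Rightarrow> int) \<Rightarrow> nat \<Rightarrow> real" where
  "shifted d mu chi k = real_of_int (chi k) + (2 * real k - real d - 1) / 2 + mu"

text \<open>Membership in the Minkowski sum
 V^a(1,d) = 3/2 sum[0, beta_i - beta_j] + a/2 sum[-beta_k, beta_k] + sum[-beta_k, 0].\<close>
definition in_V :: "nat \<Rightarrow> nat \<Rightarrow> (nat \<Rightarrow> real) \<Rightarrow> bool" where
  "in_V a d v \<longleftrightarrow> (\<exists>t s r :: _ \<Rightarrow> real.
     (\<forall>i\<in>{1..d}. \<forall>j\<in>{1..d}. 0 \<le> t i j \<and> t i j \<le> 3/2) \<and>
     (\<forall>k\<in>{1..d}. - (real a / 2) \<le> s k \<and> s k \<le> real a / 2 \<and> -1 \<le> r k \<and> r k \<le> 0) \<and>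
     (\<forall>m\<in>{1..d}. v m = (\<Sum>j=1..d. t m j) - (\<Sum>i=1..d. t i m) + s m + r m))"

text \<open>The decomposition defining e(chi): v = sum_{j<i<=e} c_ij(beta_i-beta_j)
 + sum_{e<j<i} c_ij(beta_i-beta_j) + sum_{j<=e<i} 3/2(beta_i-beta_j) + sum_i c_i beta_i.\<close>
definition e_decomp :: "nat \<Rightarrow> nat \<Rightarrow> (nat \<Rightarrow> real) \<Rightarrow> nat \<Rightarrow> bool" where
  "e_decomp a d v e \<longleftrightarrow> (\<exists>(cc :: nat \<Rightarrow> nat \<Rightarrow> real) (c :: nat \<Rightarrow> real).
     (\<forall>i j. 1 \<le> j \<longrightarrow> j < i \<longrightarrow> i \<le> d \<longrightarrow> 0 \<le> cc i j \<and> cc i j \<le> 3/2) \<and>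
     (\<forall>i\<in>{1..d}. (i \<le> e \<longrightarrow> - ((real a + 2) / 2) \<le> c i \<and> c i \<le> - (real a / 2)) \<and>
                 (e < i \<longrightarrow> - (real a / 2) < c i \<and> c i \<le> real a / 2)) \<and>
     (\<forall>m\<in>{1..d}. v m =
        (\<Sum>j\<in>{1..<m}. if (m \<le> e) = (j \<le> e) then cc m j else 0)
      - (\<Sum>i\<in>{m<..d}. if (m \<le> e) = (i \<le> e) then cc i m else 0)
      + (if m \<le> e then - (3/2) * (real d - real e) else (3/2) * real e)
      + c m))"

definition e_of :: "nat \<Rightarrow> nat \<Rightarrow> real \<Rightarrow> (nat \<Rightarrow> int) \<Rightarrow> nat" where
  "e_of a d mu chi = (THE e. e \<le> d \<and> e_decomp a d (shifted d mu chi) e)"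

definition p_l :: "nat \<Rightarrow> nat \<Rightarrow> real \<Rightarrow> (nat \<Rightarrow> int) \<Rightarrow> nat \<Rightarrow> real" where
  "p_l a d mu psi l = (\<Sum>i=1..l. shifted d mu psi i)
     + (3/2) * real l * (real d - real l) + (real a / 2) * real l"

definition p_chi :: "nat \<Rightarrow> nat \<Rightarrow> real \<Rightarrow> (nat \<Rightarrow> int) \<Rightarrow> real" where
  "p_chi a d mu chi = p_l a d mu chi (e_of a d mu chi)"

end

theory Submission
  imports Defs
begin

text \<open>
  Write v = \<chi> + \<rho> + \<delta>. The decomposition defining e(\<chi>) amounts to writing
  v = \<Sum>_{j<i} w_ij (\<beta>_i - \<beta>_j) + \<Sum> c_i \<beta>_i with 0 \<le> w_ij \<le> 3/2, and w_ij = 3/2 across the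
  cut j \<le> e < i. Summing the first l coordinates gives
  p_l = \<Sum>_{m \<le> l < i} (3/2 - w_im) + \<Sum>_{m \<le> l} (c_m + a/2):
  the first sum is nonnegative and vanishes for l = e, and the summands of the second are
  \<le> 0 up to e and > 0 after it. So any admissible e is the last minimiser of l \<mapsto> p_l,
  which makes e(\<chi>) unique. Conversely, at the last minimiser a decomposition exists: on each
  of the blocks (0, e] and (e, d] the sorted vector v splits into a point of the zonotope
  3/2 \<Sum> [0, \<beta>_i - \<beta>_j] plus a diagonal part, by cutting the block recursively at the touching
  points of the lower convex hull of its partial sums; the bounds on the diagonal part come
  from v \<in> V^a(1,d) and from the minimality of e.
\<close>

lemma sum_greaterThanAtMost_split:
  fixes f :: "nat \<Rightarrow> 'a::comm_monoid_add"
  assumes "p \<le> k" "k \<le> q"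
  shows "(\<Sum>m\<in>{p<..q}. f m) = (\<Sum>m\<in>{p<..k}. f m) + (\<Sum>m\<in>{k<..q}. f m)"
  by (simp add: ivl_disj_un_two(6)[OF assms, symmetric] sum.union_disjoint ivl_disj_int)

lemma sum_greaterThanLessThan_split:
  fixes f :: "nat \<Rightarrow> 'a::comm_monoid_add"
  assumes "p \<le> k" "k < q"
  shows "(\<Sum>m\<in>{p<..<q}. f m) = (\<Sum>m\<in>{p<..k}. f m) + (\<Sum>m\<in>{k<..<q}. f m)"
  by (simp add: ivl_disj_un_two(2)[OF assms, symmetric] sum.union_disjoint ivl_disj_int)

lemma sum_greaterThanAtMost_add_const:
  fixes x :: "nat \<Rightarrow> real"
  assumes "p \<le> k"
  shows "(\<Sum>m\<in>{p<..k}. x m + b) = (\<Sum>m\<in>{p<..k}. x m) + b * (real k - real p)"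
    and "(\<Sum>m\<in>{p<..k}. x m - b) = (\<Sum>m\<in>{p<..k}. x m) - b * (real k - real p)"
  using assms by (simp_all add: sum.distrib sum_subtractf of_nat_diff mult.commute)

lemma sum_outflow_minus_inflow:
  fixes t :: "nat \<Rightarrow> nat \<Rightarrow> real"
  assumes "p \<le> l" "l \<le> q"
  shows "(\<Sum>m\<in>{p<..l}. (\<Sum>j\<in>{p<..q}. t m j) - (\<Sum>i\<in>{p<..q}. t i m))
       = (\<Sum>m\<in>{p<..l}. \<Sum>j\<in>{l<..q}. t m j) - (\<Sum>m\<in>{p<..l}. \<Sum>i\<in>{l<..q}. t i m)"
proof -
  have "(\<Sum>m\<in>{p<..l}. \<Sum>i\<in>{p<..l}. t i m) = (\<Sum>m\<in>{p<..l}. \<Sum>j\<in>{p<..l}. t m j)"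
    by (rule sum.swap)
  then show ?thesis
    by (simp add: sum_greaterThanAtMost_split[OF assms] sum.distrib sum_subtractf)
qed

lemma sum_sign_change_minimal:
  fixes f :: "nat \<Rightarrow> real"
  assumes "\<And>m. 0 < m \<Longrightarrow> m \<le> e \<Longrightarrow> f m \<le> 0" "\<And>m. e < m \<Longrightarrow> m \<le> d \<Longrightarrow> 0 < f m" "l \<le> d"
  shows "(\<Sum>m\<in>{0<..e}. f m) \<le> (\<Sum>m\<in>{0<..l}. f m)"
    and "e < l \<Longrightarrow> (\<Sum>m\<in>{0<..e}. f m) < (\<Sum>m\<in>{0<..l}. f m)"
proof -
  show strict: "(\<Sum>m\<in>{0<..e}. f m) < (\<Sum>m\<in>{0<..l}. f m)" if "e < l"
  proof -
    have "0 < (\<Sum>m\<in>{e<..l}. f m)" using assms(2,3) that by (intro sum_pos) auto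
    then show ?thesis using sum_greaterThanAtMost_split[of 0 e l f] that by simp
  qed
  show "(\<Sum>m\<in>{0<..e}. f m) \<le> (\<Sum>m\<in>{0<..l}. f m)"
  proof (cases "l \<le> e")
    case True
    have "(\<Sum>m\<in>{l<..e}. f m) \<le> 0" using assms(1) by (intro sum_nonpos) auto
    then show ?thesis using sum_greaterThanAtMost_split[of 0 l e f] True by simp
  qed (use strict in simp)
qed

lemma ex_min_slope:
  fixes f :: "nat \<Rightarrow> real"
  assumes "p < q"
  obtains k s where "p < k" "k \<le> q" "f k - f p = s * (real k - real p)"
    and "\<And>j. p \<le> j \<Longrightarrow> j \<le> q \<Longrightarrow> s * (real j - real p) \<le> f j - f p"
proof -
  define slope where "slope j = (f j - f p) / (real j - real p)" for j
  obtain k where k: "k \<in> {p<..q}" and min: "\<And>j. j \<in> {p<..q} \<Longrightarrow> slope k \<le> slope j"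
    using ex_is_arg_min_if_finite[of "{p<..q}" slope] \<open>p < q\<close>
    unfolding is_arg_min_linorder by fastforce
  have "slope k * (real j - real p) \<le> f j - f p" if "p \<le> j" "j \<le> q" for j
  proof (cases "j = p")
    case False
    then have "0 < real j - real p" using that by simp
    then show ?thesis using min[of j] that False by (simp add: slope_def pos_le_divide_eq)
  qed simp
  moreover have "f k - f p = slope k * (real k - real p)" using k by (simp add: slope_def)
  ultimately show ?thesis using that k by auto
qed

lemma ex_last_minimizer:
  fixes f :: "nat \<Rightarrow> 'a::linorder"
  obtains e where "e \<le> n" "\<And>l. l \<le> n \<Longrightarrow> f e \<le> f l" "\<And>l. e < l \<Longrightarrow> l \<le> n \<Longrightarrow> f e < f l"
proof -
  define M where "M = Min (f ` {..n})"
  define e where "e = Max {l. l \<le> n \<and> f l = M}"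
  have "M \<in> f ` {..n}" unfolding M_def by (intro Min_in) auto
  then have "e \<in> {l. l \<le> n \<and> f l = M}" unfolding e_def by (intro Max_in) auto
  then have e: "e \<le> n" "f e = M" by simp_all
  have M_le: "M \<le> f l" if "l \<le> n" for l unfolding M_def using that by (intro Min_le) auto
  show ?thesis
  proof (rule that)
    show "f e < f l" if "e < l" "l \<le> n" for l
    proof -
      have "f l \<noteq> M"
      proof
        assume "f l = M"
        then have "l \<le> e" unfolding e_def using that by (intro Max_ge) auto
        then show False using that by simp
      qed
      then show ?thesis using M_le[OF that(2)] e(2) by simp
    qed
  qed (use e M_le in simp_all)
qed

text \<open>flow p q z m is the \<beta>_m-coordinate of \<Sum>_{p<j<i\<le>q} z_ij (\<beta>_i - \<beta>_j), and in_zonotope p q c x says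
  that the coordinates p < m \<le> q of x form a point of the zonotope c \<Sum>_{p<j<i\<le>q} [0, \<beta>_i - \<beta>_j].\<close>

definition flow :: "nat \<Rightarrow> nat \<Rightarrow> (nat \<Rightarrow> nat \<Rightarrow> real) \<Rightarrow> nat \<Rightarrow> real" where
  "flow p q z m = (\<Sum>j\<in>{p<..<m}. z m j) - (\<Sum>i\<in>{m<..q}. z i m)"

definition in_zonotope :: "nat \<Rightarrow> nat \<Rightarrow> real \<Rightarrow> (nat \<Rightarrow> real) \<Rightarrow> bool" where
  "in_zonotope p q c x \<longleftrightarrow> (\<exists>z. (\<forall>i j. p < j \<longrightarrow> j < i \<longrightarrow> i \<le> q \<longrightarrow> 0 \<le> z i j \<and> z i j \<le> c) \<and>
     (\<forall>m\<in>{p<..q}. x m = flow p q z m))"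

lemma in_zonotope_mono:
  assumes "in_zonotope p q c x" "c \<le> c'"
  shows "in_zonotope p q c' x"
  using assms unfolding in_zonotope_def by (meson order_trans)

lemma in_zonotope_cong:
  assumes "\<And>m. m \<in> {p<..q} \<Longrightarrow> x m = x' m"
  shows "in_zonotope p q c x \<longleftrightarrow> in_zonotope p q c x'"
  using assms unfolding in_zonotope_def by auto

lemma flow_glue:
  fixes zL zR :: "nat \<Rightarrow> nat \<Rightarrow> real"
  assumes "p \<le> k" "k \<le> q"
    and z: "z = (\<lambda>i j. if i \<le> k then zL i j else if k < j then zR i j else c)"
  shows "m \<in> {p<..k} \<Longrightarrow> flow p q z m = flow p k zL m - c * (real q - real k)"
    and "m \<in> {k<..q} \<Longrightarrow> flow p q z m = flow k q zR m + c * (real k - real p)"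
proof -
  assume m: "m \<in> {p<..k}"
  have "(\<Sum>i\<in>{m<..q}. z i m) = (\<Sum>i\<in>{m<..k}. zL i m) + (\<Sum>i\<in>{k<..q}. c)"
    using m assms by (simp add: sum_greaterThanAtMost_split[of m k q])
  then show "flow p q z m = flow p k zL m - c * (real q - real k)"
    using m assms(2) by (simp add: flow_def z of_nat_diff)
next
  assume m: "m \<in> {k<..q}"
  have "(\<Sum>j\<in>{p<..<m}. z m j) = (\<Sum>j\<in>{p<..k}. c) + (\<Sum>j\<in>{k<..<m}. zR m j)"
    using m assms by (simp add: sum_greaterThanLessThan_split[of p k m])
  then show "flow p q z m = flow k q zR m + c * (real k - real p)"
    using m assms(1) by (simp add: flow_def z of_nat_diff)
qed

lemma in_zonotope_glue:
  assumes "p \<le> k" "k \<le> q" "0 \<le> c"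
    and "in_zonotope p k c (\<lambda>m. x m + c * (real q - real k))"
    and "in_zonotope k q c (\<lambda>m. x m - c * (real k - real p))"
  shows "in_zonotope p q c x"
proof -
  obtain zL where zL: "\<forall>i j. p < j \<longrightarrow> j < i \<longrightarrow> i \<le> k \<longrightarrow> 0 \<le> zL i j \<and> zL i j \<le> c"
    "\<forall>m\<in>{p<..k}. x m + c * (real q - real k) = flow p k zL m"
    using assms(4) unfolding in_zonotope_def by blast
  obtain zR where zR: "\<forall>i j. k < j \<longrightarrow> j < i \<longrightarrow> i \<le> q \<longrightarrow> 0 \<le> zR i j \<and> zR i j \<le> c"
    "\<forall>m\<in>{k<..q}. x m - c * (real k - real p) = flow k q zR m"
    using assms(5) unfolding in_zonotope_def by blast
  define z where "z = (\<lambda>i j. if i \<le> k then zL i j else if k < j then zR i j else c)"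
  have "x m = flow p q z m" if "m \<in> {p<..q}" for m
  proof (cases "m \<le> k")
    case True
    then show ?thesis using that zL(2) flow_glue(1)[OF assms(1,2) z_def] by force
  next
    case False
    then have "m \<in> {k<..q}" using that by simp
    then show ?thesis using zR(2) flow_glue(2)[OF assms(1,2) z_def] by force
  qed
  moreover have "\<forall>i j. p < j \<longrightarrow> j < i \<longrightarrow> i \<le> q \<longrightarrow> 0 \<le> z i j \<and> z i j \<le> c"
    using zL(1) zR(1) \<open>0 \<le> c\<close> by (simp add: z_def)
  ultimately show ?thesis unfolding in_zonotope_def by blast
qed

lemma sum_flow:
  assumes "p \<le> l" "l \<le> q"
  shows "(\<Sum>m\<in>{p<..l}. flow p q z m) = - (\<Sum>m\<in>{p<..l}. \<Sum>i\<in>{l<..q}. z i m)"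
proof -
  define t where "t i j = (if j < i then z i j else 0)" for i j
  have "flow p q z m = (\<Sum>j\<in>{p<..q}. t m j) - (\<Sum>i\<in>{p<..q}. t i m)" if "m \<in> {p<..l}" for m
  proof -
    have "{j \<in> {p<..q}. j < m} = {p<..<m}" "{i \<in> {p<..q}. m < i} = {m<..q}"
      using that assms by auto
    then show ?thesis
      unfolding flow_def t_def sum.inter_filter[OF finite_greaterThanAtMost, symmetric] by simp
  qed
  then have "(\<Sum>m\<in>{p<..l}. flow p q z m) = (\<Sum>m\<in>{p<..l}. (\<Sum>j\<in>{p<..q}. t m j) - (\<Sum>i\<in>{p<..q}. t i m))"
    by (rule sum.cong[OF refl])
  also have "\<dots> = - (\<Sum>m\<in>{p<..l}. \<Sum>i\<in>{l<..q}. z i m)"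
    by (simp add: sum_outflow_minus_inflow[OF assms] t_def)
  finally show ?thesis .
qed

lemma in_zonotope_zero_length:
  assumes "q \<le> Suc p" "0 \<le> c" "(\<Sum>m\<in>{p<..q}. x m) = 0"
  shows "in_zonotope p q c x"
proof -
  have "x m = flow p q (\<lambda>i j. 0) m" if "m \<in> {p<..q}" for m
  proof -
    have "{p<..q} = {m}" using that assms(1) by auto
    then show ?thesis using assms(3) by (simp add: flow_def)
  qed
  then show ?thesis using assms(2) unfolding in_zonotope_def by auto
qed

text \<open>Shrinking the capacity to the largest ratio of partial-sum deficits makes one of the
  bounds tight at an interior k; the zonotope then splits at k, with the full new capacity on
  every edge across the cut.\<close>

lemma ex_tight_capacity:
  fixes x :: "nat \<Rightarrow> real"
  assumes "Suc p < q" "mono_on {p<..q} x"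
    and sum_eq_0: "(\<Sum>m\<in>{p<..q}. x m) = 0"
    and bound: "\<And>k. p \<le> k \<Longrightarrow> k \<le> q \<Longrightarrow>
      - c * (real k - real p) * (real q - real k) \<le> (\<Sum>m\<in>{p<..k}. x m)"
  obtains c' k where "0 \<le> c'" "c' \<le> c" "p < k" "k < q"
    and "(\<Sum>m\<in>{p<..k}. x m) = - c' * (real k - real p) * (real q - real k)"
    and "\<And>k. p \<le> k \<Longrightarrow> k \<le> q \<Longrightarrow>
      - c' * (real k - real p) * (real q - real k) \<le> (\<Sum>m\<in>{p<..k}. x m)"
proof -
  define r where "r k = - (\<Sum>m\<in>{p<..k}. x m) / ((real k - real p) * (real q - real k))" for k
  have pos: "0 < (real k - real p) * (real q - real k)" if "k \<in> {p<..<q}" for k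
    using that by simp
  obtain k where k: "k \<in> {p<..<q}" and max: "\<And>k'. k' \<in> {p<..<q} \<Longrightarrow> r k' \<le> r k"
    using ex_is_arg_min_if_finite[of "{p<..<q}" "\<lambda>k. - r k"] \<open>Suc p < q\<close>
    unfolding is_arg_min_linorder by fastforce
  have "(\<Sum>m\<in>{p<..q}. x (Suc p)) \<le> (\<Sum>m\<in>{p<..q}. x m)"
    using \<open>mono_on {p<..q} x\<close> by (intro sum_mono) (auto intro: mono_onD)
  then have "x (Suc p) \<le> 0"
    using sum_eq_0 \<open>Suc p < q\<close> by (simp add: mult_le_0_iff)
  then have "0 \<le> r (Suc p)"
    using \<open>Suc p < q\<close> by (simp add: r_def greaterThanAtMost_upt divide_nonpos_pos)
  then have "0 \<le> r k" using max[of "Suc p"] \<open>Suc p < q\<close> by simp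
  moreover have "r k \<le> c"
  proof -
    have "- (\<Sum>m\<in>{p<..k}. x m) \<le> c * ((real k - real p) * (real q - real k))"
      using bound[of k] k by (simp add: algebra_simps)
    then show ?thesis unfolding r_def pos_divide_le_eq[OF pos[OF k]] .
  qed
  moreover have "(\<Sum>m\<in>{p<..k}. x m) = - r k * (real k - real p) * (real q - real k)"
    using pos[OF k] by (simp add: r_def field_simps)
  moreover have "- r k * (real k' - real p) * (real q - real k') \<le> (\<Sum>m\<in>{p<..k'}. x m)"
    if "p \<le> k'" "k' \<le> q" for k'
  proof (cases "k' \<in> {p<..<q}")
    case True
    have "- (\<Sum>m\<in>{p<..k'}. x m) \<le> r k * ((real k' - real p) * (real q - real k'))"
      using max[OF True] unfolding r_def[of k'] pos_divide_le_eq[OF pos[OF True]] .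
    then show ?thesis by (simp add: algebra_simps)
  next
    case False
    then have "k' = p \<or> k' = q" using that by auto
    then show ?thesis using sum_eq_0 by auto
  qed
  ultimately show ?thesis using that k by auto
qed

lemma sorted_zero_sum_in_zonotope:
  fixes x :: "nat \<Rightarrow> real"
  assumes "p \<le> q" "0 \<le> c" "mono_on {p<..q} x"
    and "(\<Sum>m\<in>{p<..q}. x m) = 0"
    and "\<And>k. p \<le> k \<Longrightarrow> k \<le> q \<Longrightarrow>
      - c * (real k - real p) * (real q - real k) \<le> (\<Sum>m\<in>{p<..k}. x m)"
  shows "in_zonotope p q c x"
  using assms
proof (induction "q - p" arbitrary: p q c x rule: less_induct)
  case less
  note mono = \<open>mono_on {p<..q} x\<close> and sum_eq_0 = \<open>(\<Sum>m\<in>{p<..q}. x m) = 0\<close>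
  show ?case
  proof (cases "Suc p < q")
    case False
    then show ?thesis using in_zonotope_zero_length less.prems by simp
  next
    case True
    obtain c' k where c': "0 \<le> c'" "c' \<le> c" and k: "p < k" "k < q"
      and tight: "(\<Sum>m\<in>{p<..k}. x m) = - c' * (real k - real p) * (real q - real k)"
      and bound: "\<And>k. p \<le> k \<Longrightarrow> k \<le> q \<Longrightarrow>
        - c' * (real k - real p) * (real q - real k) \<le> (\<Sum>m\<in>{p<..k}. x m)"
      using ex_tight_capacity[OF True mono sum_eq_0 less.prems(5)] by blast
    have "in_zonotope p k c' (\<lambda>m. x m + c' * (real q - real k))"
    proof (rule less.hyps)
      show "mono_on {p<..k} (\<lambda>m. x m + c' * (real q - real k))"
        using mono k by (auto simp: mono_on_def)
      show "- c' * (real j - real p) * (real k - real j)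
          \<le> (\<Sum>m\<in>{p<..j}. x m + c' * (real q - real k))" if "p \<le> j" "j \<le> k" for j
        unfolding sum_greaterThanAtMost_add_const[OF that(1)]
        using bound[of j] that k by (simp add: algebra_simps)
      show "(\<Sum>m\<in>{p<..k}. x m + c' * (real q - real k)) = 0"
        unfolding sum_greaterThanAtMost_add_const(1)[OF less_imp_le[OF k(1)]]
        using tight by (simp add: algebra_simps)
    qed (use k c' in simp_all)
    moreover have "in_zonotope k q c' (\<lambda>m. x m - c' * (real k - real p))"
    proof (rule less.hyps)
      have split: "(\<Sum>m\<in>{p<..j}. x m) = (\<Sum>m\<in>{p<..k}. x m) + (\<Sum>m\<in>{k<..j}. x m)" if "k \<le> j" for j
        using sum_greaterThanAtMost_split[of p k j] that k by simp
      show "mono_on {k<..q} (\<lambda>m. x m - c' * (real k - real p))"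
        using mono k by (auto simp: mono_on_def)
      show "(\<Sum>m\<in>{k<..q}. x m - c' * (real k - real p)) = 0"
        unfolding sum_greaterThanAtMost_add_const(2)[OF less_imp_le[OF k(2)]]
        using split[of q] k tight sum_eq_0 by (simp add: algebra_simps)
      show "- c' * (real j - real k) * (real q - real j)
          \<le> (\<Sum>m\<in>{k<..j}. x m - c' * (real k - real p))" if "k \<le> j" "j \<le> q" for j
        unfolding sum_greaterThanAtMost_add_const(2)[OF that(1)]
        using bound[of j] split[of j] that k tight by (simp add: algebra_simps)
    qed (use k c' in simp_all)
    ultimately show ?thesis
      using in_zonotope_glue[of p k q c' x] in_zonotope_mono[of p q c' x c] k c' by simp
  qed
qed

lemma min_slope_segment_in_zonotope:
  fixes y :: "nat \<Rightarrow> real"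
  assumes "p < k" "k \<le> q" "0 \<le> c" "mono_on {p<..k} y"
    and "(\<Sum>m\<in>{p<..k}. y m) + c * (real k - real p) * (real q - real k) = s * (real k - real p)"
    and "\<And>j. p \<le> j \<Longrightarrow> j \<le> k \<Longrightarrow>
      s * (real j - real p) \<le> (\<Sum>m\<in>{p<..j}. y m) + c * (real j - real p) * (real q - real j)"
  shows "in_zonotope p k c (\<lambda>m. y m - s + c * (real q - real k))"
proof (rule sorted_zero_sum_in_zonotope)
  show "mono_on {p<..k} (\<lambda>m. y m - s + c * (real q - real k))"
    using assms(4) by (auto simp: mono_on_def)
  show "(\<Sum>m\<in>{p<..k}. y m - s + c * (real q - real k)) = 0"
    using assms(1,5) by (simp add: sum_greaterThanAtMost_add_const algebra_simps)
  show "- c * (real j - real p) * (real k - real j)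
      \<le> (\<Sum>m\<in>{p<..j}. y m - s + c * (real q - real k))" if "p \<le> j" "j \<le> k" for j
    using assms(6)[OF that] that by (simp add: sum_greaterThanAtMost_add_const algebra_simps)
qed (use assms(1,3) in simp_all)

text \<open>The box part b is the derivative of the lower convex hull of K k = \<Sum>_{p<m\<le>k} y m +
  c (k - p) (q - k): it is constant, equal to the minimal slope s, up to the first touching point k,
  and the remaining block is treated recursively.\<close>

lemma sorted_in_zonotope_plus_box:
  fixes y :: "nat \<Rightarrow> real"
  assumes "p \<le> q" "0 \<le> c" "mono_on {p<..q} y"
    and "\<And>k. p \<le> k \<Longrightarrow> k \<le> q \<Longrightarrow>
      (real k - real p) * lo \<le> (\<Sum>m\<in>{p<..k}. y m) + c * (real k - real p) * (real q - real k)"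
    and "\<And>k. p \<le> k \<Longrightarrow> k \<le> q \<Longrightarrow>
      (\<Sum>m\<in>{p<..q}. y m) - ((\<Sum>m\<in>{p<..k}. y m) + c * (real k - real p) * (real q - real k))
        \<le> (real q - real k) * hi"
  shows "\<exists>b. (\<forall>m\<in>{p<..q}. lo \<le> b m \<and> b m \<le> hi) \<and> in_zonotope p q c (\<lambda>m. y m - b m)"
  using assms
proof (induction "q - p" arbitrary: p y rule: less_induct)
  case less
  note mono = \<open>mono_on {p<..q} y\<close> and lower = less.prems(4) and upper = less.prems(5)
  define K where "K k = (\<Sum>m\<in>{p<..k}. y m) + c * (real k - real p) * (real q - real k)" for k
  show ?case
  proof (cases "p < q")
    case False
    then show ?thesis by (simp add: in_zonotope_def)
  next
    case True
    obtain k s where k: "p < k" "k \<le> q" and tight: "K k = s * (real k - real p)"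
      and above: "\<And>j. p \<le> j \<Longrightarrow> j \<le> q \<Longrightarrow> s * (real j - real p) \<le> K j"
      using ex_min_slope[OF True, of K] by (auto simp: K_def)
    have "lo \<le> s" using lower[of k] k tight by (simp add: K_def)
    have "s * (real q - real p) \<le> (\<Sum>m\<in>{p<..q}. y m)" using above[of q] True by (simp add: K_def)
    moreover have "(\<Sum>m\<in>{p<..q}. y m) \<le> hi * (real q - real p)"
      using upper[of p] True by (simp add: K_def mult.commute)
    ultimately have "s \<le> hi"
      by (rule mult_right_le_imp_le[OF order_trans]) (use True in simp)
    have left: "in_zonotope p k c (\<lambda>m. y m - s + c * (real q - real k))"
    proof (rule min_slope_segment_in_zonotope[OF k \<open>0 \<le> c\<close>])
      show "mono_on {p<..k} y" using mono k by (auto intro: mono_on_subset)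
    qed (use tight above k in \<open>simp_all add: K_def\<close>)
    have shift: "(\<Sum>m\<in>{k<..j}. y m - c * (real k - real p)) + c * (real j - real k) * (real q - real j)
        = K j - K k" if "k \<le> j" for j
      using sum_greaterThanAtMost_split[of p k j y] that k
      by (simp add: sum_greaterThanAtMost_add_const K_def algebra_simps)
    obtain b where b: "\<forall>m\<in>{k<..q}. lo \<le> b m \<and> b m \<le> hi"
      and right: "in_zonotope k q c (\<lambda>m. y m - c * (real k - real p) - b m)"
    proof (rule less.hyps[THEN exE, of k "\<lambda>m. y m - c * (real k - real p)"])
      show "(real j - real k) * lo \<le> (\<Sum>m\<in>{k<..j}. y m - c * (real k - real p))
          + c * (real j - real k) * (real q - real j)" if "k \<le> j" "j \<le> q" for j
      proof -
        have "lo * (real j - real k) \<le> s * (real j - real k)"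
          using \<open>lo \<le> s\<close> that by (intro mult_right_mono) auto
        then show ?thesis
          unfolding shift[OF that(1)] using above[of j] tight that k by (simp add: algebra_simps)
      qed
      show "(\<Sum>m\<in>{k<..q}. y m - c * (real k - real p)) - ((\<Sum>m\<in>{k<..j}. y m - c * (real k - real p))
          + c * (real j - real k) * (real q - real j)) \<le> (real q - real j) * hi" if "k \<le> j" "j \<le> q" for j
        using shift[OF that(1)] shift[of q] upper[of j] that k by (simp add: K_def)
    qed (use k mono \<open>0 \<le> c\<close> in \<open>auto simp: mono_on_def\<close>)
    define b' where "b' m = (if m \<le> k then s else b m)" for m
    have "in_zonotope p q c (\<lambda>m. y m - b' m)"
    proof (rule in_zonotope_glue)
      show "in_zonotope p k c (\<lambda>m. y m - b' m + c * (real q - real k))"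
        by (rule iffD1[OF in_zonotope_cong left]) (simp add: b'_def)
      show "in_zonotope k q c (\<lambda>m. y m - b' m - c * (real k - real p))"
        by (rule iffD1[OF in_zonotope_cong right]) (simp add: b'_def)
    qed (use k \<open>0 \<le> c\<close> in simp_all)
    moreover have "\<forall>m\<in>{p<..q}. lo \<le> b' m \<and> b' m \<le> hi"
      using b \<open>lo \<le> s\<close> \<open>s \<le> hi\<close> by (simp add: b'_def)
    ultimately show ?thesis by blast
  qed
qed

definition p_vec :: "nat \<Rightarrow> nat \<Rightarrow> (nat \<Rightarrow> real) \<Rightarrow> nat \<Rightarrow> real" where
  "p_vec a d v l = (\<Sum>i\<in>{0<..l}. v i) + (3/2) * real l * (real d - real l) + (real a / 2) * real l"

lemma p_l_eq_p_vec: "p_l a d mu psi l = p_vec a d (shifted d mu psi) l"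
  by (simp add: p_l_def p_vec_def atLeastSucAtMost_greaterThanAtMost)

lemma mono_on_shifted:
  assumes "dominant d chi"
  shows "mono_on {0<..d} (shifted d mu chi)"
proof (rule mono_onI)
  fix i j assume "i \<in> {0<..d}" "j \<in> {0<..d}" "i \<le> j"
  then have "chi i \<le> chi j" using assms unfolding dominant_def by simp
  with \<open>i \<le> j\<close> show "shifted d mu chi i \<le> shifted d mu chi j"
    unfolding shifted_def by (simp add: field_simps)
qed

lemma flow_eq_masked_flow:
  fixes w :: "nat \<Rightarrow> nat \<Rightarrow> real"
  assumes "e \<le> d" "\<And>i j. j \<le> e \<Longrightarrow> e < i \<Longrightarrow> w i j = 3/2" "m \<in> {1..d}"
  shows "flow 0 d w m = (\<Sum>j\<in>{1..<m}. if (m \<le> e) = (j \<le> e) then w m j else 0)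
      - (\<Sum>i\<in>{m<..d}. if (m \<le> e) = (i \<le> e) then w i m else 0)
      + (if m \<le> e then - (3/2) * (real d - real e) else (3/2) * real e)"
proof -
  have lessThan: "{Suc 0..<m} = {0<..<m}" by auto
  show ?thesis
  proof (cases "m \<le> e")
    case True
    have "(\<Sum>i\<in>{m<..d}. f i) = (\<Sum>i\<in>{m<..e}. f i) + (\<Sum>i\<in>{e<..d}. f i)" for f :: "nat \<Rightarrow> real"
      using sum_greaterThanAtMost_split[of m e d] True assms(1) by simp
    moreover have "(\<Sum>i\<in>{e<..d}. w i m) = (\<Sum>i\<in>{e<..d}. 3/2)"
      using True assms(2) by (intro sum.cong) auto
    ultimately show ?thesis
      using True assms(1) by (simp add: flow_def lessThan of_nat_diff)
  next
    case False
    have "(\<Sum>j\<in>{0<..<m}. f j) = (\<Sum>j\<in>{0<..e}. f j) + (\<Sum>j\<in>{e<..<m}. f j)" for f :: "nat \<Rightarrow> real"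
      using sum_greaterThanLessThan_split[of 0 e m] False by simp
    moreover have "(\<Sum>j\<in>{0<..e}. w m j) = (\<Sum>j\<in>{0<..e}. 3/2)"
      using False assms(2) by (intro sum.cong) auto
    ultimately show ?thesis
      using False by (simp add: flow_def lessThan)
  qed
qed

text \<open>The cross terms 3/2 (\<beta>_i - \<beta>_j), j \<le> e < i, of the decomposition defining e(\<chi>) are
  absorbed into a flow that is saturated across the cut at e.\<close>

lemma e_decomp_iff_flow:
  assumes "e \<le> d"
  shows "e_decomp a d v e \<longleftrightarrow> (\<exists>w c.
     (\<forall>i j. 0 < j \<longrightarrow> j < i \<longrightarrow> i \<le> d \<longrightarrow> 0 \<le> w i j \<and> w i j \<le> 3/2) \<and>
     (\<forall>i j. j \<le> e \<longrightarrow> e < i \<longrightarrow> w i j = 3/2) \<and>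
     (\<forall>i\<in>{1..d}. (i \<le> e \<longrightarrow> - ((real a + 2) / 2) \<le> c i \<and> c i \<le> - (real a / 2)) \<and>
                 (e < i \<longrightarrow> - (real a / 2) < c i \<and> c i \<le> real a / 2)) \<and>
     (\<forall>m\<in>{1..d}. v m = flow 0 d w m + c m))" (is "_ \<longleftrightarrow> ?flow")
proof
  assume "e_decomp a d v e"
  then obtain cc c where cc: "\<forall>i j. 1 \<le> j \<longrightarrow> j < i \<longrightarrow> i \<le> d \<longrightarrow> 0 \<le> cc i j \<and> cc i j \<le> 3/2"
    and c: "\<forall>i\<in>{1..d}. (i \<le> e \<longrightarrow> - ((real a + 2) / 2) \<le> c i \<and> c i \<le> - (real a / 2)) \<and>
                 (e < i \<longrightarrow> - (real a / 2) < c i \<and> c i \<le> real a / 2)"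
    and v: "\<forall>m\<in>{1..d}. v m =
        (\<Sum>j\<in>{1..<m}. if (m \<le> e) = (j \<le> e) then cc m j else 0)
      - (\<Sum>i\<in>{m<..d}. if (m \<le> e) = (i \<le> e) then cc i m else 0)
      + (if m \<le> e then - (3/2) * (real d - real e) else (3/2) * real e)
      + c m"
    unfolding e_decomp_def by blast
  define w where "w i j = (if (i \<le> e) = (j \<le> e) then cc i j else 3/2)" for i j
  have "v m = flow 0 d w m + c m" if "m \<in> {1..d}" for m
    using v that flow_eq_masked_flow[OF assms, of w m] by (simp add: w_def cong: if_cong)
  moreover have "\<forall>i j. 0 < j \<longrightarrow> j < i \<longrightarrow> i \<le> d \<longrightarrow> 0 \<le> w i j \<and> w i j \<le> 3/2"
    using cc by (simp add: w_def)
  ultimately show ?flow using c by (intro exI[of _ w] exI[of _ c]) (auto simp: w_def)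
next
  assume ?flow
  then obtain w c where w: "\<forall>i j. 0 < j \<longrightarrow> j < i \<longrightarrow> i \<le> d \<longrightarrow> 0 \<le> w i j \<and> w i j \<le> 3/2"
    and cross: "\<forall>i j. j \<le> e \<longrightarrow> e < i \<longrightarrow> w i j = 3/2"
    and c: "\<forall>i\<in>{1..d}. (i \<le> e \<longrightarrow> - ((real a + 2) / 2) \<le> c i \<and> c i \<le> - (real a / 2)) \<and>
                 (e < i \<longrightarrow> - (real a / 2) < c i \<and> c i \<le> real a / 2)"
    and v: "\<forall>m\<in>{1..d}. v m = flow 0 d w m + c m"
    by blast
  show "e_decomp a d v e"
    unfolding e_decomp_def
  proof (intro exI[of _ w] exI[of _ c] conjI)
    show "\<forall>i j. 1 \<le> j \<longrightarrow> j < i \<longrightarrow> i \<le> d \<longrightarrow> 0 \<le> w i j \<and> w i j \<le> 3/2"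
      using w by simp
    show "\<forall>m\<in>{1..d}. v m = (\<Sum>j\<in>{1..<m}. if (m \<le> e) = (j \<le> e) then w m j else 0)
      - (\<Sum>i\<in>{m<..d}. if (m \<le> e) = (i \<le> e) then w i m else 0)
      + (if m \<le> e then - (3/2) * (real d - real e) else (3/2) * real e) + c m"
      using v cross flow_eq_masked_flow[OF assms, of w] by simp
  qed (use c in blast)
qed

lemma p_vec_flow:
  assumes "\<forall>m\<in>{1..d}. v m = flow 0 d w m + c m" "l \<le> d"
  shows "p_vec a d v l = (\<Sum>m\<in>{0<..l}. \<Sum>i\<in>{l<..d}. 3/2 - w i m) + (\<Sum>m\<in>{0<..l}. c m + real a / 2)"
proof -
  have "(\<Sum>m\<in>{0<..l}. v m) = (\<Sum>m\<in>{0<..l}. flow 0 d w m + c m)"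
    using assms by (intro sum.cong) auto
  also have "\<dots> = - (\<Sum>m\<in>{0<..l}. \<Sum>i\<in>{l<..d}. w i m) + (\<Sum>m\<in>{0<..l}. c m)"
    using sum_flow[of 0 l d w] assms(2) by (simp add: sum.distrib)
  finally show ?thesis
    using assms(2) by (simp add: p_vec_def sum_subtractf sum.distrib of_nat_diff algebra_simps)
qed

lemma e_decomp_p_vec_minimal:
  assumes "e_decomp a d v e" "e \<le> d" "l \<le> d"
  shows "p_vec a d v e \<le> p_vec a d v l" and "e < l \<Longrightarrow> p_vec a d v e < p_vec a d v l"
proof -
  obtain w c where w: "\<forall>i j. 0 < j \<longrightarrow> j < i \<longrightarrow> i \<le> d \<longrightarrow> 0 \<le> w i j \<and> w i j \<le> 3/2"
    and cross: "\<forall>i j. j \<le> e \<longrightarrow> e < i \<longrightarrow> w i j = 3/2"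
    and c: "\<forall>i\<in>{1..d}. (i \<le> e \<longrightarrow> - ((real a + 2) / 2) \<le> c i \<and> c i \<le> - (real a / 2)) \<and>
                 (e < i \<longrightarrow> - (real a / 2) < c i \<and> c i \<le> real a / 2)"
    and v: "\<forall>m\<in>{1..d}. v m = flow 0 d w m + c m"
    using assms(1) e_decomp_iff_flow[OF assms(2)] by blast
  define G where "G k = (\<Sum>m\<in>{0<..k}. c m + real a / 2)" for k
  have "c m + real a / 2 \<le> 0" if "0 < m" "m \<le> e" for m
    using c that assms(2) by auto
  moreover have "0 < c m + real a / 2" if "e < m" "m \<le> d" for m
    using c that by auto
  ultimately have "G e \<le> G l" and "e < l \<Longrightarrow> G e < G l"
    unfolding G_def by (blast intro: sum_sign_change_minimal[OF _ _ assms(3)])+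
  moreover have "p_vec a d v e = G e"
    using p_vec_flow[OF v assms(2)] cross by (simp add: G_def)
  moreover have "G l \<le> p_vec a d v l"
  proof -
    have "0 \<le> (\<Sum>m\<in>{0<..l}. \<Sum>i\<in>{l<..d}. 3/2 - w i m)"
      using w by (intro sum_nonneg) auto
    then show ?thesis using p_vec_flow[OF v assms(3)] by (simp add: G_def)
  qed
  ultimately show "p_vec a d v e \<le> p_vec a d v l" and "e < l \<Longrightarrow> p_vec a d v e < p_vec a d v l"
    by auto
qed

lemma e_of_eqI:
  assumes "e_decomp a d (shifted d mu chi) e" "e \<le> d"
  shows "e_of a d mu chi = e"
  unfolding e_of_def
proof (rule the_equality)
  fix e' assume "e' \<le> d \<and> e_decomp a d (shifted d mu chi) e'"
  then have e': "e_decomp a d (shifted d mu chi) e'" "e' \<le> d" by simp_all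
  show "e' = e"
  proof (rule linorder_cases)
    assume "e' < e"
    then show ?thesis
      using e_decomp_p_vec_minimal[OF e' assms(2)] e_decomp_p_vec_minimal(1)[OF assms e'(2)] by simp
  next
    assume "e < e'"
    then show ?thesis
      using e_decomp_p_vec_minimal[OF assms e'(2)] e_decomp_p_vec_minimal(1)[OF e' assms(2)] by simp
  qed
qed (use assms in simp)

lemma in_V_p_vec_bounds:
  assumes "in_V a d v" "l \<le> d"
  shows "- real l \<le> p_vec a d v l" and "p_vec a d v d - p_vec a d v l \<le> (real d - real l) * real a"
proof -
  obtain t :: "nat \<Rightarrow> nat \<Rightarrow> real" and s r :: "nat \<Rightarrow> real"
    where t: "\<forall>i\<in>{1..d}. \<forall>j\<in>{1..d}. 0 \<le> t i j \<and> t i j \<le> 3/2"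
    and sr: "\<forall>k\<in>{1..d}. - (real a / 2) \<le> s k \<and> s k \<le> real a / 2 \<and> -1 \<le> r k \<and> r k \<le> 0"
    and v: "\<forall>m\<in>{1..d}. v m = (\<Sum>j=1..d. t m j) - (\<Sum>i=1..d. t i m) + s m + r m"
    using assms(1) unfolding in_V_def by blast
  have sr_bounds: "- (real a / 2) - 1 \<le> s k + r k \<and> s k + r k \<le> real a / 2" if "0 < k" "k \<le> d" for k
    using bspec[OF sr, of k] that by auto
  have sum_v: "(\<Sum>m\<in>{0<..k}. v m) = (\<Sum>m\<in>{0<..k}. \<Sum>j\<in>{k<..d}. t m j)
      - (\<Sum>m\<in>{0<..k}. \<Sum>i\<in>{k<..d}. t i m) + (\<Sum>m\<in>{0<..k}. s m + r m)" if "k \<le> d" for k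
  proof -
    have "(\<Sum>m\<in>{0<..k}. v m)
        = (\<Sum>m\<in>{0<..k}. ((\<Sum>j\<in>{0<..d}. t m j) - (\<Sum>i\<in>{0<..d}. t i m)) + (s m + r m))"
      using v that by (intro sum.cong) (auto simp: atLeastSucAtMost_greaterThanAtMost)
    then show ?thesis
      using sum_outflow_minus_inflow[of 0 k d t] that by (simp add: sum.distrib)
  qed
  have cross_bounds: "0 \<le> (\<Sum>m\<in>{0<..l}. \<Sum>j\<in>{l<..d}. t' m j)
      \<and> (\<Sum>m\<in>{0<..l}. \<Sum>j\<in>{l<..d}. t' m j) \<le> 3/2 * real l * (real d - real l)"
    if "\<And>m j. 0 < m \<Longrightarrow> m \<le> d \<Longrightarrow> 0 < j \<Longrightarrow> j \<le> d \<Longrightarrow> 0 \<le> t' m j \<and> t' m j \<le> 3/2" for t'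
  proof
    show "0 \<le> (\<Sum>m\<in>{0<..l}. \<Sum>j\<in>{l<..d}. t' m j)"
      using that assms(2) by (intro sum_nonneg) auto
    have "(\<Sum>m\<in>{0<..l}. \<Sum>j\<in>{l<..d}. t' m j) \<le> (\<Sum>m\<in>{0<..l}. \<Sum>j\<in>{l<..d}. 3/2)"
      using that assms(2) by (intro sum_mono) auto
    then show "(\<Sum>m\<in>{0<..l}. \<Sum>j\<in>{l<..d}. t' m j) \<le> 3/2 * real l * (real d - real l)"
      using assms(2) by (simp add: of_nat_diff algebra_simps)
  qed
  have A: "0 \<le> (\<Sum>m\<in>{0<..l}. \<Sum>j\<in>{l<..d}. t m j)
      \<and> (\<Sum>m\<in>{0<..l}. \<Sum>j\<in>{l<..d}. t m j) \<le> 3/2 * real l * (real d - real l)"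
    by (rule cross_bounds) (use t in auto)
  have B: "0 \<le> (\<Sum>m\<in>{0<..l}. \<Sum>i\<in>{l<..d}. t i m)
      \<and> (\<Sum>m\<in>{0<..l}. \<Sum>i\<in>{l<..d}. t i m) \<le> 3/2 * real l * (real d - real l)"
    by (rule cross_bounds) (use t in auto)
  have "(\<Sum>m\<in>{0<..l}. - (real a / 2) - 1) \<le> (\<Sum>m\<in>{0<..l}. s m + r m)"
    using sr_bounds assms(2) by (intro sum_mono) auto
  then have "- (real a / 2) * real l - real l \<le> (\<Sum>m\<in>{0<..l}. s m + r m)"
    by (simp add: algebra_simps)
  then show "- real l \<le> p_vec a d v l"
    using sum_v[OF assms(2)] A B unfolding p_vec_def by linarith
  define H where "H = real a / 2 * (real d - real l)"
  have "(\<Sum>m\<in>{l<..d}. s m + r m) \<le> (\<Sum>m\<in>{l<..d}. real a / 2)"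
    using sr_bounds by (intro sum_mono) auto
  then have "(\<Sum>m\<in>{0<..d}. s m + r m) \<le> (\<Sum>m\<in>{0<..l}. s m + r m) + H"
    using sum_greaterThanAtMost_split[of 0 l d "\<lambda>m. s m + r m"] assms(2)
    by (simp add: H_def of_nat_diff mult.commute)
  moreover have "p_vec a d v d - p_vec a d v l
      = (\<Sum>m\<in>{0<..d}. v m) - (\<Sum>m\<in>{0<..l}. v m) - 3/2 * real l * (real d - real l) + H"
    by (simp add: p_vec_def H_def field_simps)
  moreover have "(\<Sum>m\<in>{0<..d}. v m) = (\<Sum>m\<in>{0<..d}. s m + r m)"
    using sum_v[of d] by simp
  moreover have "H + H = (real d - real l) * real a" by (simp add: H_def algebra_simps)
  ultimately show "p_vec a d v d - p_vec a d v l \<le> (real d - real l) * real a"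
    using A B sum_v[OF assms(2)] by linarith
qed

lemma lower_block_in_zonotope:
  assumes "mono_on {0<..d} v" "in_V a d v" "e \<le> d"
    and "\<And>l. l \<le> d \<Longrightarrow> p_vec a d v e \<le> p_vec a d v l"
  shows "\<exists>b. (\<forall>m\<in>{0<..e}. - ((real a + 2) / 2) \<le> b m \<and> b m \<le> - (real a / 2)) \<and>
    in_zonotope 0 e (3/2) (\<lambda>m. v m + 3/2 * (real d - real e) - b m)"
proof -
  have partial: "(\<Sum>m\<in>{0<..k}. v m + 3/2 * (real d - real e)) + 3/2 * (real k - real 0) * (real e - real k)
      = p_vec a d v k - real a / 2 * real k" for k
    unfolding sum_greaterThanAtMost_add_const(1)[OF le0] by (simp add: p_vec_def field_simps)
  show ?thesis
  proof (rule sorted_in_zonotope_plus_box[where y = "\<lambda>m. v m + 3/2 * (real d - real e)"])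
    show "mono_on {0<..e} (\<lambda>m. v m + 3/2 * (real d - real e))"
      using assms(1,3) by (auto simp: mono_on_def)
    show "(real k - real 0) * - ((real a + 2) / 2)
        \<le> (\<Sum>m\<in>{0<..k}. v m + 3/2 * (real d - real e)) + 3/2 * (real k - real 0) * (real e - real k)"
      if "0 \<le> k" "k \<le> e" for k
      unfolding partial using in_V_p_vec_bounds(1)[OF assms(2), of k] that assms(3)
      by (simp add: field_simps)
    show "(\<Sum>m\<in>{0<..e}. v m + 3/2 * (real d - real e))
        - ((\<Sum>m\<in>{0<..k}. v m + 3/2 * (real d - real e)) + 3/2 * (real k - real 0) * (real e - real k))
        \<le> (real e - real k) * - (real a / 2)" if "0 \<le> k" "k \<le> e" for k
      using partial[of e] partial[of k] assms(4)[of k] that assms(3) by (simp add: field_simps)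
  qed simp_all
qed

lemma upper_block_in_zonotope:
  assumes "mono_on {0<..d} v" "in_V a d v" "e \<le> d"
    and "\<And>l. e < l \<Longrightarrow> l \<le> d \<Longrightarrow> p_vec a d v e < p_vec a d v l"
  shows "\<exists>b. (\<forall>m\<in>{e<..d}. - (real a / 2) < b m \<and> b m \<le> real a / 2) \<and>
    in_zonotope e d (3/2) (\<lambda>m. v m - 3/2 * real e - b m)"
proof -
  \<comment> \<open>Strict minimality after e gives a positive lower slope \<epsilon>; it yields -a/2 < b m.\<close>
  obtain \<epsilon> where "0 < \<epsilon>"
    and slope: "\<And>j. e \<le> j \<Longrightarrow> j \<le> d \<Longrightarrow> \<epsilon> * (real j - real e) \<le> p_vec a d v j - p_vec a d v e"
  proof (cases "e < d")
    case True
    obtain k s where k: "e < k" "k \<le> d" and tight: "p_vec a d v k - p_vec a d v e = s * (real k - real e)"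
      and "\<And>j. e \<le> j \<Longrightarrow> j \<le> d \<Longrightarrow> s * (real j - real e) \<le> p_vec a d v j - p_vec a d v e"
      using ex_min_slope[OF True, of "p_vec a d v"] by blast
    moreover have "0 < s * (real k - real e)" using assms(4)[OF k] tight by simp
    then have "0 < s" using k by (simp add: zero_less_mult_iff)
    ultimately show ?thesis using that by blast
  next
    case False
    then show ?thesis using that[of 1] assms(3) by simp
  qed
  have partial: "(\<Sum>m\<in>{e<..k}. v m - 3/2 * real e) + 3/2 * (real k - real e) * (real d - real k)
      = p_vec a d v k - p_vec a d v e - real a / 2 * (real k - real e)" if "e \<le> k" for k
    unfolding sum_greaterThanAtMost_add_const(2)[OF that] p_vec_def
    using sum_greaterThanAtMost_split[of 0 e k v] that by (simp add: field_simps)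
  have "\<exists>b. (\<forall>m\<in>{e<..d}. - (real a / 2) + \<epsilon> \<le> b m \<and> b m \<le> real a / 2) \<and>
    in_zonotope e d (3/2) (\<lambda>m. v m - 3/2 * real e - b m)"
  proof (rule sorted_in_zonotope_plus_box[where y = "\<lambda>m. v m - 3/2 * real e"])
    show "mono_on {e<..d} (\<lambda>m. v m - 3/2 * real e)"
      using assms(1,3) by (auto simp: mono_on_def)
    show "(real k - real e) * (- (real a / 2) + \<epsilon>)
        \<le> (\<Sum>m\<in>{e<..k}. v m - 3/2 * real e) + 3/2 * (real k - real e) * (real d - real k)"
      if "e \<le> k" "k \<le> d" for k
      unfolding partial[OF that(1)] using slope[OF that] by (simp add: field_simps)
    show "(\<Sum>m\<in>{e<..d}. v m - 3/2 * real e)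
        - ((\<Sum>m\<in>{e<..k}. v m - 3/2 * real e) + 3/2 * (real k - real e) * (real d - real k))
        \<le> (real d - real k) * (real a / 2)" if "e \<le> k" "k \<le> d" for k
      using partial[OF that(1)] partial[OF assms(3)] in_V_p_vec_bounds(2)[OF assms(2) that(2)]
      by (simp add: field_simps)
  qed (use assms(3) in simp_all)
  then obtain b where "\<forall>m\<in>{e<..d}. - (real a / 2) + \<epsilon> \<le> b m \<and> b m \<le> real a / 2"
    and "in_zonotope e d (3/2) (\<lambda>m. v m - 3/2 * real e - b m)" by blast
  then show ?thesis using \<open>0 < \<epsilon>\<close> by (intro exI[of _ b]) auto
qed

lemma e_decomp_at_last_minimizer:
  assumes "mono_on {0<..d} v" "in_V a d v" "e \<le> d"
    and "\<And>l. l \<le> d \<Longrightarrow> p_vec a d v e \<le> p_vec a d v l"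
    and "\<And>l. e < l \<Longrightarrow> l \<le> d \<Longrightarrow> p_vec a d v e < p_vec a d v l"
  shows "e_decomp a d v e"
proof -
  obtain b1 zL where b1: "\<forall>m\<in>{0<..e}. - ((real a + 2) / 2) \<le> b1 m \<and> b1 m \<le> - (real a / 2)"
    and zL: "\<forall>i j. 0 < j \<longrightarrow> j < i \<longrightarrow> i \<le> e \<longrightarrow> 0 \<le> zL i j \<and> zL i j \<le> 3/2"
    and flowL: "\<forall>m\<in>{0<..e}. v m + 3/2 * (real d - real e) - b1 m = flow 0 e zL m"
    using lower_block_in_zonotope[OF assms(1-4)] unfolding in_zonotope_def by blast
  obtain b2 zR where b2: "\<forall>m\<in>{e<..d}. - (real a / 2) < b2 m \<and> b2 m \<le> real a / 2"
    and zR: "\<forall>i j. e < j \<longrightarrow> j < i \<longrightarrow> i \<le> d \<longrightarrow> 0 \<le> zR i j \<and> zR i j \<le> 3/2"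
    and flowR: "\<forall>m\<in>{e<..d}. v m - 3/2 * real e - b2 m = flow e d zR m"
    using upper_block_in_zonotope[OF assms(1-3,5)] unfolding in_zonotope_def by blast
  define w where "w = (\<lambda>i j. if i \<le> e then zL i j else if e < j then zR i j else 3/2 :: real)"
  define c where "c m = (if m \<le> e then b1 m else b2 m)" for m
  have "v m = flow 0 d w m + c m" if "m \<in> {1..d}" for m
  proof (cases "m \<le> e")
    case True
    then have m: "m \<in> {0<..e}" using that by simp
    show ?thesis using bspec[OF flowL m] flow_glue(1)[OF le0 assms(3) w_def m] True by (simp add: c_def)
  next
    case False
    then have m: "m \<in> {e<..d}" using that by simp
    show ?thesis using bspec[OF flowR m] flow_glue(2)[OF le0 assms(3) w_def m] False by (simp add: c_def)
  qed
  moreover have "\<forall>i j. 0 < j \<longrightarrow> j < i \<longrightarrow> i \<le> d \<longrightarrow> 0 \<le> w i j \<and> w i j \<le> 3/2"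
    using zL zR by (simp add: w_def)
  moreover have "\<forall>i\<in>{1..d}. (i \<le> e \<longrightarrow> - ((real a + 2) / 2) \<le> c i \<and> c i \<le> - (real a / 2)) \<and>
      (e < i \<longrightarrow> - (real a / 2) < c i \<and> c i \<le> real a / 2)"
    using b1 b2 by (simp add: c_def)
  ultimately show ?thesis
    unfolding e_decomp_iff_flow[OF assms(3)] by (intro exI[of _ w] exI[of _ c]) (simp add: w_def)
qed

theorem lemma3p6:
  fixes a d :: nat and mu :: real and chi :: "nat \<Rightarrow> int"
  assumes "dominant d chi"
    and "in_V a d (shifted d mu chi)"
  shows "\<forall>l\<in>{1..d}. p_l a d mu chi l \<ge> p_chi a d mu chi \<and>
           (l > e_of a d mu chi \<longrightarrow> p_l a d mu chi l > p_chi a d mu chi)"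
proof -
  obtain e where e: "e \<le> d"
    and minimal: "\<And>l. l \<le> d \<Longrightarrow> p_vec a d (shifted d mu chi) e \<le> p_vec a d (shifted d mu chi) l"
    and last: "\<And>l. e < l \<Longrightarrow> l \<le> d \<Longrightarrow> p_vec a d (shifted d mu chi) e < p_vec a d (shifted d mu chi) l"
    using ex_last_minimizer by blast
  have "e_decomp a d (shifted d mu chi) e"
    using e_decomp_at_last_minimizer[OF mono_on_shifted[OF assms(1)] assms(2) e minimal last] .
  then have "e_of a d mu chi = e" using e by (rule e_of_eqI)
  then show ?thesis using minimal last by (simp add: p_chi_def p_l_eq_p_vec)
qed

end
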